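(* Let $f\in\mathcal{S}(\Omega)$ and let $x\in\Omega\setminus\mathbb{R}$. (1) If $f'_s(x)=0$, then one of the following holds: (a) $\mathbb{S}_x$ is included in $V(f)$, $V(f^c)$, $V(N(f))$ and $V(N(f^c))$; (b) $\mathbb{S}_x$ intersects neither $V(f)$ nor $V(f^c)$; moreover it intersects neither $V(N(f))$ nor $V(N(f^c))$, unless $A$ is singular and $f^\circ_s(x)$ (the constant value of $f$ on $\mathbb{S}_x$) or $f^\circ_s(x)^c$ is a nonzero element of norm $0$. (2) If $f'_s(x)$ is a right zero divisor, then one of the following holds: (a) $\mathbb{S}_x$ intersects $V(f)$ at at least one point $y$, and $\mathbb{S}_x\cap V(f)$ is the set of all $y'\in\mathbb{S}_x$ such that $(\mathrm{im}(y')-\mathrm{im}(y))f'_s(x)=0$. Moreover $y^c\notin V(f)$ and $y^c\in V(N(f^c))$. The equality $(f'_s(x),f'_s(x)^c,y)=0$ is equivalent to $\mathbb{S}_x\subseteq V(N(f^c))$ and to $y\in V(N(f))$; if it holds, then $\mathbb{S}_x\subseteq V(N(f))$ if, and only if, $[n(f'_s(x)),y]=0$; (b) $\mathbb{S}_x$ does not intersect $V(f)$. (3) If $f'_s(x)$ is neither $0$ nor a right zero divisor, then one of the following holds: (a) $\mathbb{S}_x$ intersects $V(f)$ at exactly one point $y$, and $y^c\in V(N(f^c))$. If $f'_s(x)$ is invertible, then $y=\mathrm{re}(x)-f^\circ_s(x)f'_s(x)^{-1}$. The equality $(f'_s(x),f'_s(x)^c,y)=0$ is equivalent to $\mathbb{S}_x\subseteq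 V(N(f^c))$ and to $y\in V(N(f))$; if it holds, then $\mathbb{S}_x\subseteq V(N(f))$ if, and only if, $[n(f'_s(x)),y]=0$. In particular, if $f'_s(x)\in C_A\setminus\{0\}$, then $\mathbb{S}_x$ is included both in $V(N(f))$ and in $V(N(f^c))$ and $\mathbb{S}_x\cap V(f^c)=\{f'_s(x)^{-1}y^cf'_s(x)\}$; (b) $\mathbb{S}_x$ does not intersect $V(f)$. If $f'_s(x)\in C_A\setminus\{0\}$, then $\mathbb{S}_x$ does not intersect $V(f^c)$ and it cannot be included both in $V(N(f))$ and in $V(N(f^c))$. If, moreover, $f^\circ_s(x)\in C_A\setminus\{0\}$ (or if $A$ is compatible), then $\mathbb{S}_x$ is included neither in $V(N(f))$ nor in $V(N(f^c))$. Finally, if $x\in\Omega\cap\mathbb{R}$, then either $x$ belongs to $V(f)$, $V(f^c)$, $V(N(f))$ and $V(N(f^c))$; or $x$ belongs to neither $V(f)$ nor $V(f^c)$, and it belongs to neither $V(N(f))$ nor $V(N(f^c))$ unless $A$ is singular and $f(x)$ or $f(x)^c$ is a nonzero element of norm $0$.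
   Context: Let $A$ be a finite-dimensional real algebra with unit $1$ ($\mathbb{R}$ identified with $\mathbb{R}1$) which is alternative (the associator $(x,y,z)=(xy)z-x(yz)$ is alternating), with a $^*$-involution $x\mapsto x^c$ (real linear, $(x^c)^c=x$, $(xy)^c=y^cx^c$, $r^c=r$ for $r\in\mathbb{R}$). Let $t(x)=x+x^c$, $n(x)=xx^c$; $A$ is singular if some nonzero $x$ has $n(x)=0$, and compatible if $t$ takes values in the nucleus $\{r:(r,a,b)=0\ \forall a,b\}$. The center is the set of $r$ in the nucleus with $ra=ar$ for all $a$; $C_A=\{0\}\cup\{a\in A: n(a),n(a^c)$ invertible elements of the center$\}$. A nonzero $a\in A$ is a right zero divisor if $ba=0$ for some nonzero $b\in A$. $[a,b]=ab-ba$. Let $\mathbb{S}_A=\{J\in A:t(J)=0,n(J)=1\}$ (assumed non-empty), $Q_A=\mathbb{R}\cup\{x\in A:t(x),n(x)\in\mathbb{R},\ 4n(x)>t(x)^2\}$; every $x\in Q_A$ is $\alpha+\beta J$ with $\alpha,\beta\in\mathbb{R}$, $J\in\mathbb{S}_A$, $x^c=\alpha-\beta J$, $\mathrm{re}(x)=t(x)/2$, $\mathrm{im}(x)=x-\mathrm{re}(x)$, and $\mathbb{S}_x=\{\alpha+\beta I:I\in\mathbb{S}_A\}$. Let $D\subseteq\mathbb{C}$ be non-empty and invariant under complex conjugation and $\Omega=\{\alpha+\beta J:\alpha+i\beta\in D,\ J\in\mathbb{S}_A\}$. Let $A_{\mathbb{C}}=\{a+\imath b:a,b\in A\}$ with product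 $(a+\imath b)(a'+\imath b')=aa'-bb'+\imath(ab'+ba')$, conjugation $\overline{a+\imath b}=a-\imath b$, involution $(a+\imath b)^c=a^c+\imath b^c$. A stem function is $F=F_1+\imath F_2:D\to A_{\mathbb{C}}$ with $F(\bar z)=\overline{F(z)}$; it induces the slice function $f=\mathcal{I}(F)$, $f(\alpha+\beta J)=F_1(\alpha+i\beta)+JF_2(\alpha+i\beta)$. $\mathcal{S}(\Omega)$ is the set of slice functions, with slice product $f\cdot g=\mathcal{I}(FG)$, conjugate $f^c=\mathcal{I}(F^c)$, $F^c(z)=F(z)^c$, and normal function $N(f)=f\cdot f^c$. $V(h)=\{x:h(x)=0\}$. Spherical value $f^\circ_s(x)=\frac12(f(x)+f(x^c))$ and spherical derivative $f'_s(x)=\frac12\mathrm{im}(x)^{-1}(f(x)-f(x^c))$ for $x\in\Omega\setminus\mathbb{R}$. *)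

theory Defs
  imports "HOL-Analysis.Analysis"
begin

class alt_star_algebra = real_vector + times + one +
  fixes invol :: "'a \<Rightarrow> 'a"
  assumes asa_distrib_left: "(a + b) * c = a * c + b * c"
    and asa_distrib_right: "a * (b + c) = a * b + a * c"
    and asa_scaleR_left: "(r *\<^sub>R a) * b = r *\<^sub>R (a * b)"
    and asa_scaleR_right: "a * (r *\<^sub>R b) = r *\<^sub>R (a * b)"
    and asa_one_left: "1 * a = a"
    and asa_one_right: "a * 1 = a"
    and asa_one_neq_zero: "(1::'a) \<noteq> 0"
    and asa_alt_xxy: "(x * x) * y - x * (x * y) = 0"
    and asa_alt_xyx: "(x * y) * x - x * (y * x) = 0"
    and asa_alt_yxx: "(y * x) * x - y * (x * x) = 0"
    and invol_add: "invol (a + b) = invol a + invol b"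
    and invol_scaleR: "invol (r *\<^sub>R a) = r *\<^sub>R invol a"
    and invol_invol: "invol (invol a) = a"
    and invol_mult: "invol (a * b) = invol b * invol a"
    and invol_real: "invol (r *\<^sub>R 1) = r *\<^sub>R 1"

text \<open>Finite-dimensionality is stated as a hypothesis of the theorem (it cannot be a class
  axiom because span needs the real_vector sort).\<close>
definition fin_dim :: "'a::alt_star_algebra itself \<Rightarrow> bool" where
  "fin_dim _ \<longleftrightarrow> (\<exists>B::'a set. finite B \<and> span B = UNIV)"

definition rl :: "real \<Rightarrow> 'a::alt_star_algebra" where
  "rl r = r *\<^sub>R 1"

definition reals :: "'a::alt_star_algebra set" where
  "reals = range rl"

definition assoc :: "'a::alt_star_algebra \<Rightarrow> 'a \<Rightarrow> 'a \<Rightarrow> 'a" where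
  "assoc x y z = (x * y) * z - x * (y * z)"

definition comm :: "'a::alt_star_algebra \<Rightarrow> 'a \<Rightarrow> 'a" where
  "comm a b = a * b - b * a"

definition trc :: "'a::alt_star_algebra \<Rightarrow> 'a" where
  "trc a = a + invol a"

definition nrm :: "'a::alt_star_algebra \<Rightarrow> 'a" where
  "nrm a = a * invol a"

definition nucleus :: "'a::alt_star_algebra set" where
  "nucleus = {r. \<forall>a b. assoc r a b = 0}"

definition center :: "'a::alt_star_algebra set" where
  "center = {r \<in> nucleus. \<forall>a. r * a = a * r}"

definition invertible :: "'a::alt_star_algebra \<Rightarrow> bool" where
  "invertible a \<longleftrightarrow> (\<exists>b. a * b = 1 \<and> b * a = 1)"

definition inv_el :: "'a::alt_star_algebra \<Rightarrow> 'a" where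
  "inv_el a = (THE b. a * b = 1 \<and> b * a = 1)"

definition CA :: "'a::alt_star_algebra set" where
  "CA = {0} \<union> {a. nrm a \<in> center \<and> invertible (nrm a) \<and>
                     nrm (invol a) \<in> center \<and> invertible (nrm (invol a))}"

definition singular :: "'a::alt_star_algebra itself \<Rightarrow> bool" where
  "singular _ \<longleftrightarrow> (\<exists>x::'a. x \<noteq> 0 \<and> nrm x = 0)"

definition compatible :: "'a::alt_star_algebra itself \<Rightarrow> bool" where
  "compatible _ \<longleftrightarrow> (\<forall>x::'a. trc x \<in> nucleus)"

definition right_zero_divisor :: "'a::alt_star_algebra \<Rightarrow> bool" where
  "right_zero_divisor a \<longleftrightarrow> a \<noteq> 0 \<and> (\<exists>b. b \<noteq> 0 \<and> b * a = 0)"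

definition nz_null :: "'a::alt_star_algebra \<Rightarrow> bool" where
  "nz_null a \<longleftrightarrow> a \<noteq> 0 \<and> nrm a = 0"

definition SA :: "'a::alt_star_algebra set" where
  "SA = {J. trc J = 0 \<and> nrm J = 1}"

definition re_el :: "'a::alt_star_algebra \<Rightarrow> 'a" where
  "re_el x = (1/2) *\<^sub>R trc x"

definition im_el :: "'a::alt_star_algebra \<Rightarrow> 'a" where
  "im_el x = x - re_el x"

definition sph :: "'a::alt_star_algebra \<Rightarrow> 'a set" where
  "sph x = {y. \<exists>\<alpha> \<beta> J I. J \<in> SA \<and> I \<in> SA \<and> x = rl \<alpha> + \<beta> *\<^sub>R J \<and> y = rl \<alpha> + \<beta> *\<^sub>R I}"

definition OmegaD :: "complex set \<Rightarrow> 'a::alt_star_algebra set" where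
  "OmegaD D = {rl \<alpha> + \<beta> *\<^sub>R J | \<alpha> \<beta> J. Complex \<alpha> \<beta> \<in> D \<and> J \<in> SA}"

section \<open>The complexification A_C, represented as pairs (a,b) = a + i b\<close>

definition cmul :: "'a::alt_star_algebra \<times> 'a \<Rightarrow> 'a \<times> 'a \<Rightarrow> 'a \<times> 'a" where
  "cmul p q = (fst p * fst q - snd p * snd q, fst p * snd q + snd p * fst q)"

definition cbar :: "'a::alt_star_algebra \<times> 'a \<Rightarrow> 'a \<times> 'a" where
  "cbar p = (fst p, - snd p)"

definition cinvol :: "'a::alt_star_algebra \<times> 'a \<Rightarrow> 'a \<times> 'a" where
  "cinvol p = (invol (fst p), invol (snd p))"

definition stem :: "complex set \<Rightarrow> (complex \<Rightarrow> 'a::alt_star_algebra \<times> 'a) \<Rightarrow> bool" where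
  "stem D F \<longleftrightarrow> (\<forall>z\<in>D. F (cnj z) = cbar (F z))"

definition sliceI :: "complex set \<Rightarrow> (complex \<Rightarrow> 'a::alt_star_algebra \<times> 'a) \<Rightarrow> 'a \<Rightarrow> 'a" where
  "sliceI D F x = (SOME v. \<exists>\<alpha> \<beta> J. J \<in> SA \<and> Complex \<alpha> \<beta> \<in> D \<and> x = rl \<alpha> + \<beta> *\<^sub>R J \<and>
       v = fst (F (Complex \<alpha> \<beta>)) + J * snd (F (Complex \<alpha> \<beta>)))"

definition stem_prod :: "(complex \<Rightarrow> 'a::alt_star_algebra \<times> 'a) \<Rightarrow> (complex \<Rightarrow> 'a \<times> 'a) \<Rightarrow> complex \<Rightarrow> 'a \<times> 'a" where
  "stem_prod F G = (\<lambda>z. cmul (F z) (G z))"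

definition stem_conj :: "(complex \<Rightarrow> 'a::alt_star_algebra \<times> 'a) \<Rightarrow> complex \<Rightarrow> 'a \<times> 'a" where
  "stem_conj F = (\<lambda>z. cinvol (F z))"

text \<open>f = I(F), f^c = I(F^c), N(f) = f . f^c = I(F F^c), N(f^c) = f^c . (f^c)^c = I(F^c F).\<close>
definition slice_f :: "complex set \<Rightarrow> (complex \<Rightarrow> 'a::alt_star_algebra \<times> 'a) \<Rightarrow> 'a \<Rightarrow> 'a" where
  "slice_f D F = sliceI D F"

definition slice_fc :: "complex set \<Rightarrow> (complex \<Rightarrow> 'a::alt_star_algebra \<times> 'a) \<Rightarrow> 'a \<Rightarrow> 'a" where
  "slice_fc D F = sliceI D (stem_conj F)"

definition slice_Nf :: "complex set \<Rightarrow> (complex \<Rightarrow> 'a::alt_star_algebra \<times> 'a) \<Rightarrow> 'a \<Rightarrow> 'a" where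
  "slice_Nf D F = sliceI D (stem_prod F (stem_conj F))"

definition slice_Nfc :: "complex set \<Rightarrow> (complex \<Rightarrow> 'a::alt_star_algebra \<times> 'a) \<Rightarrow> 'a \<Rightarrow> 'a" where
  "slice_Nfc D F = sliceI D (stem_prod (stem_conj F) (stem_conj (stem_conj F)))"

definition Vz :: "'a::alt_star_algebra set \<Rightarrow> ('a \<Rightarrow> 'a) \<Rightarrow> 'a set" where
  "Vz \<Omega> h = {x \<in> \<Omega>. h x = 0}"

definition sph_val :: "('a::alt_star_algebra \<Rightarrow> 'a) \<Rightarrow> 'a \<Rightarrow> 'a" where
  "sph_val f x = (1/2) *\<^sub>R (f x + f (invol x))"

definition sph_der :: "('a::alt_star_algebra \<Rightarrow> 'a) \<Rightarrow> 'a \<Rightarrow> 'a" where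
  "sph_der f x = (1/2) *\<^sub>R (inv_el (im_el x) * (f x - f (invol x)))"

end

theory Submission
  imports Defs
begin

text \<open>
  On the sphere \<open>\<alpha> + \<beta> \<bbbS>\<^sub>A\<close> a slice function is affine in the imaginary unit:
  \<open>f(\<alpha> + \<beta>I) = v + \<beta> I d\<close> with \<open>v = f\<degree>\<^sub>s(x)\<close> and \<open>d = f'\<^sub>s(x)\<close>, and
  \<open>f\<^sup>c\<close>, \<open>N(f)\<close>, \<open>N(f\<^sup>c)\<close> are affine in \<open>I\<close> as well, with coefficients built from \<open>v\<close> and \<open>d\<close>.
  Such an affine expression vanishes for all \<open>I\<close> iff both coefficients vanish, so every
  claim becomes an identity in the alternative algebra. A zero \<open>I\<^sub>0\<close> of \<open>f\<close> means
  \<open>v = -\<beta> I\<^sub>0 d\<close>; it is unique unless \<open>d\<close> is a right zero divisor, and substituting it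
  into the coefficients of \<open>N(f)\<close> and \<open>N(f\<^sup>c)\<close> (via the Moufang identities) shows that
  they are governed by the associator \<open>(d, d\<^sup>c, I\<^sub>0)\<close>. If \<open>d \<in> C\<^sub>A\<close>, then \<open>n(d)\<close> is
  central and invertible, \<open>d\<^sup>-\<^sup>1 = n(d)\<^sup>-\<^sup>1 d\<^sup>c\<close>, and \<open>I \<mapsto> -(d\<^sup>-\<^sup>1 I) d\<close> maps the zeros
  of \<open>f\<close> bijectively to those of \<open>f\<^sup>c\<close>.
\<close>

lemma add_self_eq_0_iff [simp]: "a + a = 0 \<longleftrightarrow> (a::'a::real_vector) = 0"
  by (simp flip: scaleR_2)

lemma asa_mult_0_left [simp]: "0 * a = (0::'a::alt_star_algebra)"
  using asa_distrib_left[of 0 0 a] by simp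

lemma asa_mult_0_right [simp]: "a * 0 = (0::'a::alt_star_algebra)"
  using asa_distrib_right[of a 0 0] by simp

lemma asa_minus_left [simp]: "(- a) * b = - (a * b :: 'a::alt_star_algebra)"
  using asa_distrib_left[of a "- a" b] by (simp add: eq_neg_iff_add_eq_0 add.commute)

lemma asa_minus_right [simp]: "a * (- b) = - (a * b :: 'a::alt_star_algebra)"
  using asa_distrib_right[of a b "- b"] by (simp add: eq_neg_iff_add_eq_0 add.commute)

lemma asa_diff_left: "(a - b) * c = a * c - b * (c::'a::alt_star_algebra)"
  using asa_distrib_left[of a "- b" c] by simp

lemma asa_diff_right: "a * (b - c) = a * b - a * (c::'a::alt_star_algebra)"
  using asa_distrib_right[of a b "- c"] by simp

declare asa_one_left [simp] asa_one_right [simp]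

lemmas asa_ring = asa_distrib_left asa_distrib_right asa_diff_left asa_diff_right
  asa_scaleR_left asa_scaleR_right

lemma invol_zero [simp]: "invol 0 = (0::'a::alt_star_algebra)"
  using invol_scaleR[of 0 "0::'a"] by simp

lemma invol_minus [simp]: "invol (- a) = - invol (a::'a::alt_star_algebra)"
  using invol_scaleR[of "-1" a] by simp

lemma invol_diff [simp]: "invol (a - b) = invol a - invol (b::'a::alt_star_algebra)"
  using invol_add[of a "- b"] by simp

lemma invol_one [simp]: "invol 1 = (1::'a::alt_star_algebra)"
  using invol_real[of 1] by simp

lemmas [simp] = invol_add invol_scaleR invol_invol invol_mult

lemma invol_eq_0_iff [simp]: "invol a = 0 \<longleftrightarrow> a = (0::'a::alt_star_algebra)"
  by (metis invol_invol invol_zero)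

lemma invol_nrm [simp]: "invol (nrm a) = nrm (a::'a::alt_star_algebra)"
  by (simp add: nrm_def)

lemma invol_assoc: "invol (assoc a b c) = - assoc (invol c) (invol b) (invol (a::'a::alt_star_algebra))"
  by (simp add: assoc_def)

lemma assoc_add_right: "assoc a b (c + d) = assoc a b c + assoc a b (d::'a::alt_star_algebra)"
  by (simp add: assoc_def asa_ring)
lemma assoc_diff_left: "assoc (a - b) c d = assoc a c d - assoc b c (d::'a::alt_star_algebra)"
  by (simp add: assoc_def asa_ring)
lemma assoc_scaleR_right: "assoc a b (r *\<^sub>R c) = r *\<^sub>R assoc a b (c::'a::alt_star_algebra)"
  by (simp add: assoc_def asa_ring scaleR_diff_right)
lemma assoc_minus_right: "assoc a b (- c) = - assoc a b (c::'a::alt_star_algebra)"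
  by (simp add: assoc_def)

lemma assoc_self_left [simp]: "assoc x x y = (0::'a::alt_star_algebra)"
  using asa_alt_xxy by (simp add: assoc_def)
lemma assoc_self_outer [simp]: "assoc x y x = (0::'a::alt_star_algebra)"
  using asa_alt_xyx by (simp add: assoc_def)
lemma assoc_self_right [simp]: "assoc y x x = (0::'a::alt_star_algebra)"
  using asa_alt_yxx by (simp add: assoc_def)

lemma assoc_swap_left: "assoc y x z = - assoc x y (z::'a::alt_star_algebra)"
proof -
  have "assoc (x + y) (x + y) z = assoc x x z + assoc y y z + (assoc x y z + assoc y x z)"
    unfolding assoc_def by (simp add: asa_ring algebra_simps)
  then have "assoc x y z + assoc y x z = 0" by simp
  then show ?thesis by (simp add: eq_neg_iff_add_eq_0 add.commute)
qed

lemma assoc_swap_right: "assoc x z y = - assoc x y (z::'a::alt_star_algebra)"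
proof -
  have "assoc x (y + z) (y + z) = assoc x y y + assoc x z z + (assoc x y z + assoc x z y)"
    unfolding assoc_def by (simp add: asa_ring algebra_simps)
  then have "assoc x y z + assoc x z y = 0" by simp
  then show ?thesis by (simp add: eq_neg_iff_add_eq_0 add.commute)
qed

lemma assoc_cycle: "assoc x y z = assoc y z (x::'a::alt_star_algebra)"
  using assoc_swap_left[of y x z] assoc_swap_right[of y x z] by simp

section \<open>Moufang identities\<close>

lemma assoc_teichmueller:
  "assoc (w * x) y z - assoc w (x * y) z + assoc w x (y * z) =
     w * assoc x y z + assoc w x y * (z::'a::alt_star_algebra)"
  by (simp add: assoc_def asa_ring)

lemma assoc_square_left: "assoc (x * x) y z = x * assoc x y z + assoc x (x * y) (z::'a::alt_star_algebra)"
  using assoc_teichmueller[of x x y z] by (simp add: algebra_simps)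

lemma assoc_right_mult_mid:
  "assoc x (y * x) z = assoc (x * x) y z - assoc x y (x * (z::'a::alt_star_algebra))"
  using assoc_teichmueller[of y x x z]
  unfolding assoc_swap_left[of "y * x" x z] assoc_swap_left[of y "x * x" z]
    assoc_swap_left[of y x "x * z"]
  by (simp add: algebra_simps)

lemma assoc_left_mult_right: "assoc x y (x * z) = assoc x (x * y) (z::'a::alt_star_algebra)"
proof -
  have "assoc (x * y) x z - assoc x (y * x) z + assoc x y (x * z) = x * assoc y x z"
    using assoc_teichmueller[of x y x z] by simp
  then have "assoc x y (x * z) + assoc x y (x * z) = assoc x (x * y) z + assoc x (x * y) z"
    unfolding assoc_right_mult_mid[of x y z] assoc_square_left[of x y z]
      assoc_swap_left[of "x * y" x z] assoc_swap_left[of y x z]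
    by (simp add: algebra_simps)
  then show ?thesis by (simp flip: scaleR_2)
qed

lemma assoc_right_mult_right: "assoc x y (z * x) = assoc x (y * x) (z::'a::alt_star_algebra)"
proof -
  have "invol (assoc (invol x) (invol y) (invol x * invol z)) =
      invol (assoc (invol x) (invol x * invol y) (invol z))"
    by (simp only: assoc_left_mult_right)
  then have mirror: "assoc (z * x) y x = assoc z (y * x) x" by (simp add: invol_assoc)
  have "assoc x y (z * x) = assoc y (z * x) x" by (rule assoc_cycle)
  also have "\<dots> = - assoc (z * x) y x" by (simp add: assoc_swap_left[of "z * x" y x])
  also have "\<dots> = - assoc z (y * x) x" by (simp add: mirror)
  also have "\<dots> = assoc (y * x) z x" by (simp add: assoc_swap_left[of "y * x" z x])
  also have "\<dots> = assoc x (y * x) z" by (rule assoc_cycle[symmetric])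
  finally show ?thesis .
qed

lemma assoc_mult_right_self: "assoc x y z * x = assoc x (x * y) (z::'a::alt_star_algebra)"
proof -
  have "assoc x y z * x = assoc (x * x) y z - assoc x y (z * x)"
    using assoc_teichmueller[of y z x x] assoc_cycle[of x y "z * x"]
      assoc_cycle[of "x * x" y z] assoc_cycle[of x y z]
    by (simp add: algebra_simps)
  then show ?thesis
    by (simp add: assoc_right_mult_right assoc_right_mult_mid assoc_left_mult_right)
qed

lemma moufang_left: "((x * y) * x) * z = x * (y * (x * (z::'a::alt_star_algebra)))"
  using assoc_left_mult_right[of x y z] assoc_swap_left[of x "x * y" z]
  unfolding assoc_def by (simp add: algebra_simps)

lemma moufang_middle: "(x * y) * (z * x) = (x * (y * z)) * (x::'a::alt_star_algebra)"
  using assoc_mult_right_self[of x y z] assoc_cycle[of x "x * y" z]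
  unfolding assoc_def by (simp add: asa_diff_left algebra_simps)

lemma assoc_mult_self: "assoc x y (x * y) = (0::'a::alt_star_algebra)"
  using assoc_left_mult_right[of x y y] assoc_swap_right[of x "x * y" y]
  by (simp add: eq_neg_iff_add_eq_0)

lemma assoc_left_mult_self: "assoc (a * x) x b = x * assoc a x (b::'a::alt_star_algebra)"
proof -
  have "assoc (a * x) x b = assoc a (x * x) b - assoc a x (x * b)"
    using assoc_teichmueller[of a x x b] by (simp add: algebra_simps)
  also have "assoc a (x * x) b = - (x * assoc x a b + assoc x (x * a) b)"
    by (simp add: assoc_swap_left[of a "x * x" b] assoc_square_left)
  also have "assoc a x (x * b) = - assoc x (x * a) b"
    by (simp add: assoc_swap_left[of a x "x * b"] assoc_left_mult_right)
  finally show ?thesis by (simp add: assoc_swap_left[of a x b])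
qed

lemma mult_mult_self: "(a * x) * (x * b) = (a * (x * x)) * b - x * assoc a x (b::'a::alt_star_algebra)"
  using assoc_left_mult_self[of a x b] assoc_self_right[of a x]
  unfolding assoc_def by (simp add: algebra_simps)

section \<open>Nucleus, center and inverses\<close>

lemma nucleus_assoc_left: "c \<in> nucleus \<Longrightarrow> assoc c a b = (0::'a::alt_star_algebra)"
  by (simp add: nucleus_def)

lemma nucleus_assoc_mid: "c \<in> nucleus \<Longrightarrow> assoc a c b = (0::'a::alt_star_algebra)"
  using assoc_cycle[of a c b] by (simp add: nucleus_assoc_left)

lemma nucleus_diff: "a \<in> nucleus \<Longrightarrow> b \<in> nucleus \<Longrightarrow> a - b \<in> (nucleus::'a::alt_star_algebra set)"
  by (simp add: nucleus_def assoc_diff_left)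

lemma center_nucleus: "c \<in> center \<Longrightarrow> c \<in> nucleus"
  by (simp add: center_def)

lemma center_commute: "c \<in> center \<Longrightarrow> c * a = a * (c::'a::alt_star_algebra)"
  by (simp add: center_def)

lemma center_mult_assoc: "c \<in> center \<Longrightarrow> (c * a) * b = c * (a * b::'a::alt_star_algebra)"
  using nucleus_assoc_left[OF center_nucleus] by (simp add: assoc_def)

lemma center_mult_left_commute: "c \<in> center \<Longrightarrow> a * (c * b) = c * (a * b::'a::alt_star_algebra)"
  using nucleus_assoc_mid[OF center_nucleus, of c a b] center_commute[of c a] center_mult_assoc[of c a b]
  by (simp add: assoc_def)

lemma center_assoc_left: "c \<in> center \<Longrightarrow> assoc (c * a) b z = c * assoc a b (z::'a::alt_star_algebra)"
  by (simp add: assoc_def center_mult_assoc asa_diff_right)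

lemma center_assoc_mid: "c \<in> center \<Longrightarrow> assoc a (c * b) z = c * assoc a b (z::'a::alt_star_algebra)"
  using center_mult_left_commute[of c a b] center_mult_assoc[of c "a * b" z]
    center_mult_assoc[of c b z] center_mult_left_commute[of c a "b * z"]
  by (simp add: assoc_def asa_diff_right)

lemma center_inverse:
  fixes c n :: "'a::alt_star_algebra"
  assumes c: "c \<in> center" and nc: "n * c = 1"
  shows "n \<in> center" and "c * n = 1"
proof -
  show cn: "c * n = 1" using nc center_commute[OF c, of n] by simp
  have cancel: "w = 0" if "c * w = 0" for w
    using nucleus_assoc_mid[OF center_nucleus[OF c], of n w] nc that by (simp add: assoc_def)
  have "c * (n * a - a * n) = 0" for a
    using center_mult_assoc[OF c, of n a] center_mult_left_commute[OF c, of a n]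
      center_commute[OF c, of "a * n"] cn
    by (simp add: asa_diff_right)
  then have "n * a = a * n" for a using cancel by fastforce
  moreover have "c * assoc n a b = 0" for a b
    using center_mult_assoc[OF c] center_mult_left_commute[OF c] center_assoc_left[OF c, of n a b] cn
    by (simp add: assoc_def)
  then have "n \<in> nucleus" using cancel by (simp add: nucleus_def)
  ultimately show "n \<in> center" by (simp add: center_def)
qed

lemma assoc_inverse:
  fixes x e :: "'a::alt_star_algebra"
  assumes xe: "x * e = 1" and ex: "e * x = 1"
  shows "assoc e x z = 0"
proof -
  have left: "x * (e * w) = w + assoc e x w" for w
    using assoc_swap_left[of e x w] xe by (simp add: assoc_def)
  have right: "assoc e x w * x = 0" for w
    using moufang_middle[of x e w] xe left[of w] by (simp add: asa_distrib_left)
  define u where "u = assoc e x z"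
  have "assoc u x e = - u" using right[of z] xe by (simp add: assoc_def u_def)
  moreover have "assoc u x e = - assoc e x u"
    using assoc_cycle[of u x e] assoc_cycle[of x e u] assoc_swap_right[of e u x] by simp
  ultimately have "x * (e * u) = u + u" using left[of u] by simp
  moreover have "((x * (e * u)) * x) * e = x * (e * u)"
    using moufang_left[of x "e * u" e] xe by simp
  ultimately have "u + u = 0" using right[of z] by (simp add: asa_distrib_left u_def)
  then show ?thesis by (simp add: u_def)
qed

lemma inverse_unique:
  fixes x e e' :: "'a::alt_star_algebra"
  assumes "x * e = 1" "e * x = 1" "x * e' = 1" "e' * x = 1"
  shows "e' = e"
  using assoc_inverse[of x e' e] assms by (simp add: assoc_def)

lemma inv_el_eq:
  fixes x e :: "'a::alt_star_algebra"
  assumes "x * e = 1" "e * x = 1"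
  shows "inv_el x = e"
  unfolding inv_el_def using assms inverse_unique[OF assms] by blast

lemma inverse_assoc:
  fixes x e :: "'a::alt_star_algebra"
  assumes "x * e = 1" "e * x = 1"
  shows "assoc e x z = 0" "assoc e z x = 0" "assoc z x e = 0"
proof -
  show 0: "assoc e x z = 0" by (rule assoc_inverse[OF assms])
  show "assoc e z x = 0" using 0 assoc_swap_right[of e x z] by simp
  show "assoc z x e = 0" using 0 assoc_cycle[of z x e] assoc_swap_left[of e x z] by simp
qed

lemma rl_mult_left [simp]: "rl r * a = r *\<^sub>R (a::'a::alt_star_algebra)"
  by (simp add: rl_def asa_scaleR_left)

lemma rl_mult_right [simp]: "a * rl r = r *\<^sub>R (a::'a::alt_star_algebra)"
  by (simp add: rl_def asa_scaleR_right)

lemma invol_rl [simp]: "invol (rl r) = (rl r :: 'a::alt_star_algebra)"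
  by (simp add: rl_def invol_real)

lemma rl_eq_iff [simp]: "(rl a :: 'a::alt_star_algebra) = rl b \<longleftrightarrow> a = b"
  using asa_one_neq_zero by (auto simp: rl_def scaleR_cancel_right)

lemma assoc_rl_right: "assoc a b (rl r) = (0::'a::alt_star_algebra)"
  by (simp add: assoc_def asa_scaleR_right)

lemma SA_invol: "J \<in> SA \<Longrightarrow> invol J = - (J::'a::alt_star_algebra)"
  by (simp add: SA_def trc_def eq_neg_iff_add_eq_0 add.commute)

lemma SA_square: "J \<in> SA \<Longrightarrow> J * J = - (1::'a::alt_star_algebra)"
proof -
  assume J: "J \<in> SA"
  then have "- (J * J) = 1" using SA_invol[OF J] by (simp add: SA_def nrm_def)
  then show ?thesis by (simp add: minus_equation_iff)
qed

lemma SA_uminus: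
  assumes "J \<in> SA" shows "- J \<in> (SA::'a::alt_star_algebra set)"
proof -
  have "trc (- J) = 0" using SA_invol[OF assms] by (simp add: trc_def)
  moreover have "nrm (- J) = nrm J" using SA_invol[OF assms] by (simp add: nrm_def)
  ultimately show ?thesis using assms by (simp add: SA_def)
qed

lemma SA_mult_mult:
  assumes "J \<in> SA" shows "J * (J * z) = - (z::'a::alt_star_algebra)"
proof -
  have "J * (J * z) = (J * J) * z" using asa_alt_xxy[of J z] by simp
  then show ?thesis using SA_square[OF assms] by simp
qed

lemma SA_mult_eq_0_iff:
  assumes "J \<in> SA" shows "J * z = 0 \<longleftrightarrow> z = (0::'a::alt_star_algebra)"
  using SA_mult_mult[OF assms, of z] by (metis asa_mult_0_right minus_zero neg_equal_iff_equal)

lemma re_el_SA_point: "I \<in> SA \<Longrightarrow> re_el (rl \<alpha> + \<beta> *\<^sub>R I) = (rl \<alpha> :: 'a::alt_star_algebra)"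
  using SA_invol[of I] by (simp add: re_el_def trc_def rl_def scaleR_2[symmetric])

lemma im_el_SA_point: "I \<in> SA \<Longrightarrow> im_el (rl \<alpha> + \<beta> *\<^sub>R I) = \<beta> *\<^sub>R (I :: 'a::alt_star_algebra)"
  by (simp add: im_el_def re_el_SA_point)

lemma SA_scaleR_eq_cases:
  fixes I J :: "'a::alt_star_algebra"
  assumes I: "I \<in> SA" and J: "J \<in> SA" and eq: "\<beta>' *\<^sub>R I = \<beta> *\<^sub>R J"
  shows "(\<beta>' = \<beta> \<and> I = J) \<or> (\<beta>' = - \<beta> \<and> I = - J) \<or> (\<beta> = 0 \<and> \<beta>' = 0)"
proof -
  have "(\<beta>' *\<^sub>R I) * (\<beta>' *\<^sub>R I) = (\<beta> *\<^sub>R J) * (\<beta> *\<^sub>R J)" by (simp only: eq)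
  then have "rl (\<beta>' * \<beta>') = (rl (\<beta> * \<beta>) :: 'a)"
    using SA_square[OF I] SA_square[OF J] by (simp add: asa_scaleR_left asa_scaleR_right rl_def)
  then have "\<beta>' = \<beta> \<or> \<beta>' = - \<beta>" by (simp add: square_eq_iff)
  then show ?thesis
  proof
    assume "\<beta>' = \<beta>"
    then show ?thesis using eq by auto
  next
    assume b: "\<beta>' = - \<beta>"
    then have "\<beta> *\<^sub>R (- I) = \<beta> *\<^sub>R J" using eq by simp
    then have "- I = J \<or> \<beta> = 0" by (simp only: scaleR_cancel_left)
    then show ?thesis using b by auto
  qed
qed

lemma SA_point_eq_cases:
  fixes I J :: "'a::alt_star_algebra"
  assumes I: "I \<in> SA" and J: "J \<in> SA" and eq: "rl \<alpha>' + \<beta>' *\<^sub>R I = rl \<alpha> + \<beta> *\<^sub>R J"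
  shows "\<alpha>' = \<alpha> \<and> ((\<beta>' = \<beta> \<and> I = J) \<or> (\<beta>' = - \<beta> \<and> I = - J) \<or> (\<beta> = 0 \<and> \<beta>' = 0))"
proof -
  have "\<alpha>' = \<alpha>"
    using arg_cong[OF eq, of re_el] by (simp add: re_el_SA_point[OF I] re_el_SA_point[OF J])
  with eq show ?thesis using SA_scaleR_eq_cases[OF I J] by simp
qed

lemma SA_point_not_real:
  assumes J: "J \<in> SA" and b: "\<beta> \<noteq> 0"
  shows "rl \<alpha> + \<beta> *\<^sub>R J \<notin> (reals :: 'a::alt_star_algebra set)"
proof
  assume "rl \<alpha> + \<beta> *\<^sub>R J \<in> reals"
  then obtain r where "rl \<alpha> + \<beta> *\<^sub>R J = (rl r :: 'a)" by (auto simp: reals_def)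
  then have "\<beta> *\<^sub>R J = rl (r - \<alpha>)" by (simp add: rl_def algebra_simps)
  then have "(1 / \<beta>) *\<^sub>R (\<beta> *\<^sub>R J) = (1 / \<beta>) *\<^sub>R rl (r - \<alpha>)" by simp
  then have "J = rl ((r - \<alpha>) / \<beta>)" using b by (simp add: rl_def)
  then have "rl ((r - \<alpha>) / \<beta> * ((r - \<alpha>) / \<beta>)) = (rl (- 1) :: 'a)"
    using SA_square[OF J] by (simp add: rl_def asa_scaleR_left)
  then have "(r - \<alpha>) / \<beta> * ((r - \<alpha>) / \<beta>) = - 1" by (simp only: rl_eq_iff)
  moreover have "(r - \<alpha>) / \<beta> * ((r - \<alpha>) / \<beta>) \<ge> 0" by simp
  ultimately show False by simp
qed

lemma sph_SA_point:
  fixes J :: "'a::alt_star_algebra"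
  assumes J: "J \<in> SA" and b: "\<beta> \<noteq> 0"
  shows "sph (rl \<alpha> + \<beta> *\<^sub>R J) = (\<lambda>I. rl \<alpha> + \<beta> *\<^sub>R I) ` SA"
proof (intro set_eqI iffI)
  fix y assume "y \<in> sph (rl \<alpha> + \<beta> *\<^sub>R J)"
  then obtain \<alpha>' \<beta>' J' I where J': "J' \<in> SA" and I: "I \<in> SA"
    and eq: "rl \<alpha> + \<beta> *\<^sub>R J = rl \<alpha>' + \<beta>' *\<^sub>R J'" and y: "y = rl \<alpha>' + \<beta>' *\<^sub>R I"
    unfolding sph_def by blast
  from SA_point_eq_cases[OF J' J eq[symmetric]] b consider "\<alpha>' = \<alpha>" "\<beta>' = \<beta>" | "\<alpha>' = \<alpha>" "\<beta>' = - \<beta>" by blast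
  then show "y \<in> (\<lambda>I. rl \<alpha> + \<beta> *\<^sub>R I) ` SA"
  proof cases
    case 2
    then have "y = rl \<alpha> + \<beta> *\<^sub>R (- I)" using y by simp
    then show ?thesis using SA_uminus[OF I] by blast
  qed (use y I in blast)
next
  fix y :: 'a assume "y \<in> (\<lambda>I. rl \<alpha> + \<beta> *\<^sub>R I) ` SA"
  then show "y \<in> sph (rl \<alpha> + \<beta> *\<^sub>R J)" unfolding sph_def using J by blast
qed

section \<open>Elements with central invertible norm\<close>

locale central_norm =
  fixes d n :: "'a::alt_star_algebra"
  assumes nrm_center: "nrm d \<in> center"
    and nrm_invol: "nrm (invol d) = nrm d"
    and inverse_nrm: "n * nrm d = 1"
begin

abbreviation e where "e \<equiv> n * invol d"

lemma n_center: "n \<in> center" and nrm_inverse: "nrm d * n = 1"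
  using center_inverse[OF nrm_center inverse_nrm] by simp_all

lemma nrm_mult_n_mult: "nrm d * (n * w) = w"
  using center_mult_assoc[OF nrm_center, of n w] nrm_inverse by simp

lemma n_mult_nrm_mult: "n * (nrm d * w) = w"
  using center_mult_assoc[OF n_center, of "nrm d" w] inverse_nrm by simp

lemma invol_n: "invol n = n"
proof (rule inverse_unique[of "nrm d" n])
  show "nrm d * invol n = 1" using arg_cong[OF inverse_nrm, of invol] by simp
  show "invol n * nrm d = 1" using arg_cong[OF nrm_inverse, of invol] by simp
qed (simp_all add: inverse_nrm nrm_inverse)

lemma d_mult_e [simp]: "d * e = 1"
  using center_mult_left_commute[OF n_center, of d "invol d"] inverse_nrm by (simp add: nrm_def)

lemma e_mult_d [simp]: "e * d = 1"
  using center_mult_assoc[OF n_center, of "invol d" d] inverse_nrm nrm_invol by (simp add: nrm_def)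

lemma invol_d_eq: "invol d = nrm d * e"
  by (simp add: nrm_mult_n_mult)

lemma invol_e: "invol e = n * d"
  using invol_n center_commute[OF n_center, of d] by simp

lemma mult_e_mult_d [simp]: "(a * e) * d = a"
  using inverse_assoc(3)[OF e_mult_d d_mult_e, of a] by (simp add: assoc_def)

lemma mult_d_mult_e [simp]: "(a * d) * e = a"
  using inverse_assoc(3)[OF d_mult_e e_mult_d, of a] by (simp add: assoc_def)

lemma d_mult_e_mult [simp]: "d * (e * a) = a"
  using inverse_assoc(1)[OF e_mult_d d_mult_e, of a] by (simp add: assoc_def)

lemmas assoc_d_e_vanish [simp] = inverse_assoc[OF d_mult_e e_mult_d] inverse_assoc[OF e_mult_d d_mult_e]

lemma assoc_d_invol: "assoc d (invol d) z = 0"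
  by (subst invol_d_eq) (simp add: center_assoc_mid[OF nrm_center])

lemma assoc_invol_d: "assoc (invol d) d z = 0"
  by (subst invol_d_eq) (simp add: center_assoc_left[OF nrm_center])

lemma mult_invol_mult: "(a * invol d) * (d * b) = nrm d * (a * b) + assoc a (invol d) (d * b)"
proof -
  have a0: "assoc a (invol d) d = 0"
    by (subst invol_d_eq) (simp add: center_assoc_mid[OF nrm_center])
  have "invol d * d = nrm d" using nrm_invol by (simp add: nrm_def)
  then have nrm_assoc: "assoc a (invol d * d) b = 0"
    using nucleus_assoc_mid[OF center_nucleus[OF nrm_center]] by simp
  have "(a * invol d) * d = nrm d * a"
    using a0 \<open>invol d * d = nrm d\<close> center_commute[OF nrm_center, of a] by (simp add: assoc_def)
  moreover have "assoc (a * invol d) d b = - assoc a (invol d) (d * b)"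
    using assoc_teichmueller[of a "invol d" d b] nrm_assoc assoc_invol_d a0
    by (simp add: eq_neg_iff_add_eq_0)
  ultimately show ?thesis
    using center_mult_assoc[OF nrm_center, of a b] by (simp add: assoc_def algebra_simps)
qed

lemma SA_conj:
  assumes I: "I \<in> SA" shows "(e * I) * d \<in> SA"
proof -
  define K where "K = (e * I) * d"
  have K: "K = e * (I * d)" using assoc_d_e_vanish(2)[of I] by (simp add: K_def assoc_def)
  have "invol K = - ((nrm d * e) * (I * (n * d)))"
    using invol_e SA_invol[OF I] invol_d_eq by (simp add: K_def)
  also have "I * (n * d) = n * (I * d)" by (rule center_mult_left_commute[OF n_center])
  also have "(nrm d * e) * (n * (I * d)) = nrm d * (e * (n * (I * d)))"
    by (rule center_mult_assoc[OF nrm_center])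
  also have "e * (n * (I * d)) = n * (e * (I * d))"
    by (rule center_mult_left_commute[OF n_center])
  also have "nrm d * (n * (e * (I * d))) = e * (I * d)" by (rule nrm_mult_n_mult)
  finally have inv: "invol K = - K" using K by simp
  have "d * ((e * I) * d) = I * d"
    using asa_alt_xyx[of d "e * I"] by simp
  then have "K * K = (e * I) * (I * d)"
    using assoc_mult_self[of "e * I" d] by (simp add: K_def assoc_def)
  also have "\<dots> = - 1"
    using mult_mult_self[of e I d] SA_square[OF I] by simp
  finally have "K * K = - 1" .
  then show ?thesis using inv by (simp add: K_def[symmetric] SA_def trc_def nrm_def)
qed

lemma central_norm_invol: "central_norm (invol d) n"
  using nrm_center nrm_invol inverse_nrm by unfold_locales simp_all

lemma SA_zero_of_nrm_eqs:
  assumes b: "\<beta> \<noteq> 0" and norm: "v * invol v = (\<beta> * \<beta>) *\<^sub>R nrm d"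
    and mixed: "v * invol d + d * invol v = 0"
  shows "\<exists>I\<in>SA. v + \<beta> *\<^sub>R (I * d) = 0"
proof -
  txt \<open>The only candidate is \<open>I = -\<beta>\<^sup>-\<^sup>1 v d\<^sup>-\<^sup>1\<close>; the two equations make it an imaginary unit.\<close>
  define X where "X = v * invol d"
  define I where "I = - (1 / \<beta>) *\<^sub>R (n * X)"
  have ve: "v * e = n * X"
    unfolding X_def by (rule center_mult_left_commute[OF n_center])
  have zero: "v + \<beta> *\<^sub>R (I * d) = 0"
    using b ve mult_e_mult_d[of v] by (simp add: I_def asa_scaleR_left)
  have dv: "d * invol v = - X" using mixed by (simp add: X_def eq_neg_iff_add_eq_0 add.commute)
  have invI: "invol I = - I"
  proof -
    have "invol I = - (1 / \<beta>) *\<^sub>R ((n * d) * invol v)"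
      using ve[symmetric] invol_e by (simp add: I_def)
    also have "(n * d) * invol v = - (n * X)"
      using center_mult_assoc[OF n_center, of d "invol v"] dv by simp
    finally show ?thesis by (simp add: I_def)
  qed
  have "- (X * X) = (\<beta> * \<beta>) *\<^sub>R (nrm d * nrm d)"
    using mult_invol_mult[of v "invol v"] assoc_mult_self[of v "invol d"] norm dv
    by (simp add: X_def asa_scaleR_right assoc_minus_right)
  then have XX: "X * X = - ((\<beta> * \<beta>) *\<^sub>R (nrm d * nrm d))" by (metis minus_minus)
  have "nrm I = - (I * I)" using invI by (simp add: nrm_def)
  also have "I * I = (1 / \<beta> * (1 / \<beta>)) *\<^sub>R ((n * X) * (n * X))"
    by (simp add: I_def asa_scaleR_left asa_scaleR_right)
  also have "(n * X) * (n * X) = n * (X * (n * X))"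
    by (rule center_mult_assoc[OF n_center])
  also have "X * (n * X) = n * (X * X)"
    by (rule center_mult_left_commute[OF n_center])
  also have "n * (n * (X * X)) = - ((\<beta> * \<beta>) *\<^sub>R 1)"
    using n_mult_nrm_mult[of "nrm d"] by (simp add: XX asa_scaleR_right inverse_nrm)
  finally have "nrm I = 1" using b by simp
  then have "I \<in> SA" using invI by (simp add: SA_def trc_def)
  with zero show ?thesis by blast
qed

lemma conj_zero:
  assumes I0: "I0 \<in> SA" and v: "v = - (\<beta> *\<^sub>R (I0 * d))"
  shows "invol v + \<beta> *\<^sub>R ((- ((e * I0) * d)) * invol d) = 0"
proof -
  have "((e * I0) * d) * invol d = nrm d * (((e * I0) * d) * e)"
    by (subst invol_d_eq) (rule center_mult_left_commute[OF nrm_center])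
  also have "((e * I0) * d) * e = e * I0" by simp
  also have "nrm d * (e * I0) = (nrm d * e) * I0"
    by (rule center_mult_assoc[OF nrm_center, symmetric])
  also have "nrm d * e = invol d" by (rule invol_d_eq[symmetric])
  finally show ?thesis using v SA_invol[OF I0] by (simp add: asa_scaleR_left)
qed

lemma conj_zero_unique:
  assumes b: "\<beta> \<noteq> 0" and I0: "I0 \<in> SA" and v: "v = - (\<beta> *\<^sub>R (I0 * d))"
    and I: "invol v + \<beta> *\<^sub>R (I * invol d) = 0"
  shows "I = - ((e * I0) * d)"
proof -
  define K where "K = (e * I0) * d"
  have "\<beta> *\<^sub>R ((I + K) * invol d) = 0"
    using conj_zero[OF I0 v] I by (simp add: K_def asa_distrib_left scaleR_add_right algebra_simps)
  moreover have "(I + K) * invol d = nrm d * ((I + K) * e)"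
    by (subst invol_d_eq) (rule center_mult_left_commute[OF nrm_center])
  ultimately have "nrm d * ((I + K) * e) = 0" using b by simp
  then have "(I + K) * e = 0"
    using n_mult_nrm_mult[of "(I + K) * e"] by simp
  moreover have "I + K = ((I + K) * e) * d" by simp
  ultimately have "I + K = 0" by simp
  then show ?thesis by (simp add: K_def eq_neg_iff_add_eq_0)
qed

end

lemma CA_central_norm:
  fixes d :: "'a::alt_star_algebra"
  assumes "d \<in> CA" "d \<noteq> 0"
  obtains n where "central_norm d n"
proof -
  have N: "nrm d \<in> center" and N': "nrm (invol d) \<in> center" and "invertible (nrm d)"
    using assms by (auto simp: CA_def)
  then obtain n where Nn: "nrm d * n = 1" and nN: "n * nrm d = 1"
    by (auto simp: invertible_def)
  have dN': "d * nrm (invol d) = nrm d * d"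
    using asa_alt_xyx[of d "invol d"] by (simp add: nrm_def)
  have diff: "nrm (invol d) - nrm d \<in> nucleus"
    by (rule nucleus_diff[OF center_nucleus[OF N'] center_nucleus[OF N]])
  have "(nrm (invol d) - nrm d) * d = 0"
    using dN' center_commute[OF N', of d] by (simp add: asa_diff_left)
  then have "((nrm (invol d) - nrm d) * d) * invol d = 0" by simp
  then have "(nrm (invol d) - nrm d) * nrm d = 0"
    using nucleus_assoc_left[OF diff, of d "invol d"] by (simp add: assoc_def nrm_def)
  then have "((nrm (invol d) - nrm d) * nrm d) * n = 0" by simp
  then have "nrm (invol d) = nrm d"
    using nucleus_assoc_left[OF diff, of "nrm d" n] Nn by (simp add: assoc_def)
  then have "central_norm d n" using N nN by unfold_locales
  then show ?thesis by (rule that)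
qed

section \<open>Slice functions on a sphere\<close>

lemma SA_affine_vanish_iff:
  fixes p q J :: "'a::alt_star_algebra"
  assumes J: "J \<in> SA" and b: "\<beta> \<noteq> 0"
  shows "(\<forall>I\<in>SA. p + \<beta> *\<^sub>R (I * q) = 0) \<longleftrightarrow> p = 0 \<and> q = 0"
proof
  assume h: "\<forall>I\<in>SA. p + \<beta> *\<^sub>R (I * q) = 0"
  then have plus: "p + \<beta> *\<^sub>R (J * q) = 0" and minus: "p + \<beta> *\<^sub>R ((- J) * q) = 0"
    using J SA_uminus[OF J] by blast+
  have "p + p = (p + \<beta> *\<^sub>R (J * q)) + (p + \<beta> *\<^sub>R ((- J) * q))" by simp
  also have "\<dots> = 0" by (simp only: plus minus add_0)
  finally have p: "p = 0" by simp
  then have "J * q = 0" using plus b by simp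
  then show "p = 0 \<and> q = 0" using p SA_mult_eq_0_iff[OF J] by simp
qed simp

lemma nrm_conj_coeffs_at_zero:
  fixes d v I :: "'a::alt_star_algebra"
  assumes I: "I \<in> SA" and v: "v = - (\<beta> *\<^sub>R (I * d))"
  shows "invol v * v - (\<beta> * \<beta>) *\<^sub>R (invol d * d) = (\<beta> * \<beta>) *\<^sub>R (I * assoc d (invol d) I)"
    and "invol v * d + invol d * v = \<beta> *\<^sub>R assoc d (invol d) I"
proof -
  have A: "assoc (invol d) I d = assoc d (invol d) I" by (rule assoc_cycle[symmetric])
  have iv: "invol v = \<beta> *\<^sub>R (invol d * I)" using v SA_invol[OF I] by simp
  have "invol v * v = - ((\<beta> * \<beta>) *\<^sub>R ((invol d * I) * (I * d)))"
    unfolding iv by (simp add: v asa_scaleR_left asa_scaleR_right)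
  also have "(invol d * I) * (I * d) = - (invol d * d) - I * assoc d (invol d) I"
    using mult_mult_self[of "invol d" I d] SA_square[OF I] A by simp
  finally show "invol v * v - (\<beta> * \<beta>) *\<^sub>R (invol d * d) = (\<beta> * \<beta>) *\<^sub>R (I * assoc d (invol d) I)"
    by (simp add: algebra_simps)
  have "invol v * d + invol d * v = \<beta> *\<^sub>R assoc (invol d) I d"
    unfolding iv by (simp add: v assoc_def asa_scaleR_left asa_scaleR_right scaleR_diff_right)
  then show "invol v * d + invol d * v = \<beta> *\<^sub>R assoc d (invol d) I" by (simp only: A)
qed

lemma nrm_coeffs_at_zero:
  fixes d v I :: "'a::alt_star_algebra"
  assumes I: "I \<in> SA" and v: "v = - (\<beta> *\<^sub>R (I * d))"
  defines "N \<equiv> nrm d" and "A \<equiv> assoc d (invol d) I"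
  shows "v * invol v - (\<beta> * \<beta>) *\<^sub>R nrm d = - ((\<beta> * \<beta>) *\<^sub>R ((I * N) * I + N))"
    and "v * invol d + d * invol v = \<beta> *\<^sub>R (N * I - I * N - 2 *\<^sub>R A)"
    and "(v * invol v - (\<beta> * \<beta>) *\<^sub>R nrm d) + \<beta> *\<^sub>R (I * (v * invol d + d * invol v)) =
      - (2 * (\<beta> * \<beta>)) *\<^sub>R (I * A)"
proof -
  have iv: "invol v = \<beta> *\<^sub>R (invol d * I)" using v SA_invol[OF I] by simp
  have "v * invol v = - ((\<beta> * \<beta>) *\<^sub>R ((I * d) * (invol d * I)))"
    unfolding iv by (simp add: v asa_scaleR_left asa_scaleR_right)
  also have "(I * d) * (invol d * I) = (I * N) * I"
    unfolding N_def nrm_def by (rule moufang_middle)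
  finally show P0: "v * invol v - (\<beta> * \<beta>) *\<^sub>R nrm d = - ((\<beta> * \<beta>) *\<^sub>R ((I * N) * I + N))"
    by (simp add: N_def algebra_simps)
  have e1: "(I * d) * invol d = I * N + A"
    using assoc_cycle[of d "invol d" I] assoc_cycle[of "invol d" I d]
    by (simp add: assoc_def N_def A_def nrm_def)
  have e2: "d * (invol d * I) = N * I - A" by (simp add: assoc_def N_def A_def nrm_def)
  have "v * invol d + d * invol v = \<beta> *\<^sub>R (d * (invol d * I) - (I * d) * invol d)"
    unfolding iv by (simp add: v asa_scaleR_left asa_scaleR_right algebra_simps)
  also have "\<dots> = \<beta> *\<^sub>R ((N * I - A) - (I * N + A))" by (simp only: e1 e2)
  finally show P1: "v * invol d + d * invol v = \<beta> *\<^sub>R (N * I - I * N - 2 *\<^sub>R A)"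
    by (simp add: algebra_simps scaleR_2)
  have "(I * N) * I = I * (N * I)" using asa_alt_xyx[of I N] by simp
  have "I * (I * N) = - N" by (rule SA_mult_mult[OF I])
  then have "(v * invol v - (\<beta> * \<beta>) *\<^sub>R nrm d) + \<beta> *\<^sub>R (I * (v * invol d + d * invol v)) =
      - ((\<beta> * \<beta>) *\<^sub>R (I * A) + (\<beta> * \<beta>) *\<^sub>R (I * A))"
    using \<open>(I * N) * I = I * (N * I)\<close> unfolding P0 P1 by (simp add: asa_ring algebra_simps scaleR_2)
  also have "\<dots> = - (2 * (\<beta> * \<beta>)) *\<^sub>R (I * A)"
    by (simp add: scaleR_2[symmetric])
  finally show "(v * invol v - (\<beta> * \<beta>) *\<^sub>R nrm d) + \<beta> *\<^sub>R (I * (v * invol d + d * invol v)) =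
      - (2 * (\<beta> * \<beta>)) *\<^sub>R (I * A)" .
qed

lemma value_zero_cases:
  fixes w :: "'a::alt_star_algebra"
  shows "(w = 0 \<and> invol w = 0 \<and> w * invol w = 0 \<and> invol w * w = 0) \<or>
    (w \<noteq> 0 \<and> invol w \<noteq> 0 \<and>
      ((w * invol w \<noteq> 0 \<and> invol w * w \<noteq> 0) \<or> (singular TYPE('a) \<and> (nz_null w \<or> nz_null (invol w)))))"
proof (cases "w = 0")
  case False
  show ?thesis
  proof (cases "w * invol w = 0 \<or> invol w * w = 0")
    case True
    then have "nz_null w \<or> nz_null (invol w)" using False by (auto simp: nz_null_def nrm_def)
    then have "singular TYPE('a)" unfolding singular_def nz_null_def by blast
    with \<open>nz_null w \<or> nz_null (invol w)\<close> False show ?thesis by simp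
  qed (use False in simp)
qed simp

locale sphere_slice =
  fixes \<alpha> \<beta> :: real and J x v d :: "'a::alt_star_algebra"
    and f fc Nf Nfc :: "'a \<Rightarrow> 'a" and \<Omega> :: "'a set"
  assumes beta_nonzero: "\<beta> \<noteq> 0" and J: "J \<in> SA" and x_eq: "x = rl \<alpha> + \<beta> *\<^sub>R J"
    and sph_subset: "sph x \<subseteq> \<Omega>"
    and f_eq: "I \<in> SA \<Longrightarrow> f (rl \<alpha> + \<beta> *\<^sub>R I) = v + \<beta> *\<^sub>R (I * d)"
    and fc_eq: "I \<in> SA \<Longrightarrow> fc (rl \<alpha> + \<beta> *\<^sub>R I) = invol v + \<beta> *\<^sub>R (I * invol d)"
    and Nf_eq: "I \<in> SA \<Longrightarrow> Nf (rl \<alpha> + \<beta> *\<^sub>R I) =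
      (v * invol v - (\<beta> * \<beta>) *\<^sub>R nrm d) + \<beta> *\<^sub>R (I * (v * invol d + d * invol v))"
    and Nfc_eq: "I \<in> SA \<Longrightarrow> Nfc (rl \<alpha> + \<beta> *\<^sub>R I) =
      (invol v * v - (\<beta> * \<beta>) *\<^sub>R (invol d * d)) + \<beta> *\<^sub>R (I * (invol v * d + invol d * v))"
begin

abbreviation pt :: "'a \<Rightarrow> 'a" where "pt I \<equiv> rl \<alpha> + \<beta> *\<^sub>R I"

lemma sph_eq: "sph x = pt ` SA"
  using sph_SA_point[OF J beta_nonzero] by (simp add: x_eq)

lemma pt_in_V_iff: "I \<in> SA \<Longrightarrow> pt I \<in> Vz \<Omega> h \<longleftrightarrow> h (pt I) = 0"
  using sph_subset sph_eq by (auto simp: Vz_def)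

lemma sph_subset_V_iff: "sph x \<subseteq> Vz \<Omega> h \<longleftrightarrow> (\<forall>I\<in>SA. h (pt I) = 0)"
  using pt_in_V_iff by (auto simp: sph_eq)

lemma sph_disjoint_V_iff: "sph x \<inter> Vz \<Omega> h = {} \<longleftrightarrow> (\<forall>I\<in>SA. h (pt I) \<noteq> 0)"
  using pt_in_V_iff by (auto simp: sph_eq)

lemma sph_inter_V: "sph x \<inter> Vz \<Omega> h = pt ` {I \<in> SA. h (pt I) = 0}"
  using pt_in_V_iff by (auto simp: sph_eq)

lemma d_zero_case:
  assumes "d = 0"
  shows "(sph x \<subseteq> Vz \<Omega> f \<and> sph x \<subseteq> Vz \<Omega> fc \<and> sph x \<subseteq> Vz \<Omega> Nf \<and> sph x \<subseteq> Vz \<Omega> Nfc) \<or>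
    (sph x \<inter> Vz \<Omega> f = {} \<and> sph x \<inter> Vz \<Omega> fc = {} \<and>
      ((sph x \<inter> Vz \<Omega> Nf = {} \<and> sph x \<inter> Vz \<Omega> Nfc = {}) \<or>
       (singular TYPE('a) \<and> (nz_null v \<or> nz_null (invol v)))))"
  using value_zero_cases[of v] f_eq fc_eq Nf_eq Nfc_eq assms J
  by (simp add: sph_subset_V_iff sph_disjoint_V_iff nrm_def) blast

context
  fixes I0 assumes I0: "I0 \<in> SA" and zero: "f (pt I0) = 0"
begin

lemma v_eq: "v = - (\<beta> *\<^sub>R (I0 * d))"
  using zero f_eq[OF I0] by (simp add: eq_neg_iff_add_eq_0)

lemma f_zero_iff: "I \<in> SA \<Longrightarrow> f (pt I) = 0 \<longleftrightarrow> (im_el (pt I) - im_el (pt I0)) * d = 0"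
  by (simp add: f_eq v_eq im_el_SA_point I0 asa_diff_left asa_scaleR_left)

lemma assoc_pt: "assoc d (invol d) (pt I0) = \<beta> *\<^sub>R assoc d (invol d) I0"
  by (simp add: assoc_add_right assoc_scaleR_right assoc_rl_right)

lemma invol_pt_in_VNfc: "invol (pt I0) \<in> Vz \<Omega> Nfc"
proof -
  have "Nfc (pt (- I0)) = 0"
    using Nfc_eq[OF SA_uminus[OF I0]] nrm_conj_coeffs_at_zero[OF I0 v_eq] by (simp add: asa_scaleR_right)
  then show ?thesis using pt_in_V_iff[OF SA_uminus[OF I0]] SA_invol[OF I0] by simp
qed

lemma assoc_zero_iff_sph_subset_VNfc: "assoc d (invol d) (pt I0) = 0 \<longleftrightarrow> sph x \<subseteq> Vz \<Omega> Nfc"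
  using SA_affine_vanish_iff[OF J beta_nonzero] nrm_conj_coeffs_at_zero[OF I0 v_eq] beta_nonzero
  by (simp add: sph_subset_V_iff Nfc_eq assoc_pt SA_mult_eq_0_iff[OF I0])

lemma assoc_zero_iff_in_VNf: "assoc d (invol d) (pt I0) = 0 \<longleftrightarrow> pt I0 \<in> Vz \<Omega> Nf"
  using nrm_coeffs_at_zero(3)[OF I0 v_eq] beta_nonzero
  by (simp add: pt_in_V_iff[OF I0] Nf_eq[OF I0] assoc_pt SA_mult_eq_0_iff[OF I0])

lemma sph_subset_VNf_iff:
  assumes "assoc d (invol d) (pt I0) = 0"
  shows "sph x \<subseteq> Vz \<Omega> Nf \<longleftrightarrow> comm (nrm d) (pt I0) = 0"
proof -
  have A: "assoc d (invol d) I0 = 0" using assms beta_nonzero by (simp add: assoc_pt)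
  have "sph x \<subseteq> Vz \<Omega> Nf \<longleftrightarrow>
      v * invol v - (\<beta> * \<beta>) *\<^sub>R nrm d = 0 \<and> v * invol d + d * invol v = 0"
    using SA_affine_vanish_iff[OF J beta_nonzero] by (simp add: sph_subset_V_iff Nf_eq)
  also have "\<dots> \<longleftrightarrow> nrm d * I0 - I0 * nrm d = 0"
  proof (rule iffI[rotated])
    assume comm: "nrm d * I0 - I0 * nrm d = 0"
    then have "(I0 * nrm d) * I0 = nrm d * (I0 * I0)"
      using asa_alt_yxx[of "nrm d" I0] by simp
    with comm show "v * invol v - (\<beta> * \<beta>) *\<^sub>R nrm d = 0 \<and> v * invol d + d * invol v = 0"
      using nrm_coeffs_at_zero(1,2)[OF I0 v_eq] SA_square[OF I0] A by simp
  qed (use nrm_coeffs_at_zero(2)[OF I0 v_eq] A beta_nonzero in simp)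
  also have "\<dots> \<longleftrightarrow> comm (nrm d) (pt I0) = 0"
    using beta_nonzero by (simp add: comm_def asa_ring algebra_simps)
  finally show ?thesis .
qed

lemma invol_pt_in_Vf_iff: "invol (pt I0) \<in> Vz \<Omega> f \<longleftrightarrow> d = 0"
proof -
  have "f (invol (pt I0)) = - (\<beta> *\<^sub>R (I0 * d) + \<beta> *\<^sub>R (I0 * d))"
    using f_eq[OF SA_uminus[OF I0]] SA_invol[OF I0] by (simp add: v_eq)
  then show ?thesis
    using pt_in_V_iff[OF SA_uminus[OF I0]] SA_invol[OF I0] beta_nonzero SA_mult_eq_0_iff[OF I0]
    by (simp add: neg_eq_iff_add_eq_0)
qed

lemma sph_inter_Vf_eq_singleton:
  assumes "d \<noteq> 0" and "\<not> right_zero_divisor d"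
  shows "sph x \<inter> Vz \<Omega> f = {pt I0}"
proof -
  have "I = I0" if "I \<in> SA" "f (pt I) = 0" for I
  proof -
    have "(\<beta> *\<^sub>R (I - I0)) * d = 0"
      using f_zero_iff[OF that(1)] that I0 by (simp add: im_el_SA_point scaleR_diff_right)
    then have "\<beta> *\<^sub>R (I - I0) = 0" using assms unfolding right_zero_divisor_def by blast
    then show ?thesis using beta_nonzero by simp
  qed
  then have "{I \<in> SA. f (pt I) = 0} = {I0}" using I0 zero by blast
  then show ?thesis by (simp only: sph_inter_V image_insert image_empty)
qed

lemma zero_eq_of_invertible:
  assumes "invertible d"
  shows "pt I0 = re_el x - v * inv_el d"
proof -
  obtain e where de: "d * e = 1" and ed: "e * d = 1" using assms by (auto simp: invertible_def)
  have "(I0 * d) * e = I0" using inverse_assoc(3)[OF de ed, of I0] de by (simp add: assoc_def)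
  then show ?thesis
    using inv_el_eq[OF de ed] v_eq re_el_SA_point[OF J]
    by (simp add: x_eq asa_scaleR_left)
qed

lemma CA_zero_case:
  assumes "d \<in> CA" and "d \<noteq> 0"
  shows "sph x \<subseteq> Vz \<Omega> Nf \<and> sph x \<subseteq> Vz \<Omega> Nfc \<and>
    sph x \<inter> Vz \<Omega> fc = {(inv_el d * invol (pt I0)) * d}"
proof -
  obtain n where "central_norm d n" using CA_central_norm[OF assms] .
  then interpret central_norm d n .
  define K where "K = - ((e * I0) * d)"
  have K: "K \<in> SA" unfolding K_def by (rule SA_uminus[OF SA_conj[OF I0]])
  have "assoc d (invol d) (pt I0) = 0" by (rule assoc_d_invol)
  moreover have "comm (nrm d) (pt I0) = 0"
    using center_commute[OF nrm_center] by (simp add: comm_def)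
  ultimately have "sph x \<subseteq> Vz \<Omega> Nfc" and "sph x \<subseteq> Vz \<Omega> Nf"
    using assoc_zero_iff_sph_subset_VNfc sph_subset_VNf_iff by simp_all
  have "fc (pt K) = 0"
    using fc_eq[OF K] conj_zero[OF I0 v_eq] by (simp add: K_def)
  moreover have "I = K" if "I \<in> SA" "fc (pt I) = 0" for I
    using conj_zero_unique[OF beta_nonzero I0 v_eq] fc_eq[OF that(1)] that(2)
    by (simp add: K_def)
  ultimately have "{I \<in> SA. fc (pt I) = 0} = {K}" using K by blast
  then have "sph x \<inter> Vz \<Omega> fc = {pt K}" by (simp only: sph_inter_V image_insert image_empty)
  moreover have "(inv_el d * invol (pt I0)) * d = pt K"
  proof -
    have "invol (pt I0) = rl \<alpha> - \<beta> *\<^sub>R I0" using SA_invol[OF I0] by simp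
    then have "(e * invol (pt I0)) * d = rl \<alpha> - \<beta> *\<^sub>R ((e * I0) * d)"
      by (simp add: asa_diff_left asa_diff_right asa_scaleR_left asa_scaleR_right rl_def)
    then show ?thesis using inv_el_eq[OF d_mult_e e_mult_d] by (simp add: K_def)
  qed
  ultimately show ?thesis
    using \<open>sph x \<subseteq> Vz \<Omega> Nfc\<close> \<open>sph x \<subseteq> Vz \<Omega> Nf\<close> by (simp only:)
qed

end

lemma CA_no_zero_case:
  assumes nozero: "sph x \<inter> Vz \<Omega> f = {}" and "d \<in> CA" and "d \<noteq> 0"
  shows "sph x \<inter> Vz \<Omega> fc = {} \<and> \<not> sph x \<subseteq> Vz \<Omega> Nf \<and> \<not> sph x \<subseteq> Vz \<Omega> Nfc"
proof -
  obtain n where "central_norm d n" using CA_central_norm[OF assms(2,3)] .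
  then interpret central_norm d n .
  interpret conj: central_norm "invol d" n by (rule central_norm_invol)
  have nof: "v + \<beta> *\<^sub>R (I * d) \<noteq> 0" if "I \<in> SA" for I
    using nozero that by (simp add: sph_disjoint_V_iff f_eq)
  have nofc: "invol v + \<beta> *\<^sub>R (I * invol d) \<noteq> 0" if I: "I \<in> SA" for I
  proof
    assume "invol v + \<beta> *\<^sub>R (I * invol d) = 0"
    then have "invol v = - (\<beta> *\<^sub>R (I * invol d))" by (simp add: eq_neg_iff_add_eq_0)
    from conj.conj_zero[OF I this] nof[OF SA_uminus[OF conj.SA_conj[OF I]]] show False by simp
  qed
  have "\<not> sph x \<subseteq> Vz \<Omega> Nf"
    using SA_affine_vanish_iff[OF J beta_nonzero] SA_zero_of_nrm_eqs[OF beta_nonzero, of v] nof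
    by (auto simp: sph_subset_V_iff Nf_eq)
  moreover have "\<not> sph x \<subseteq> Vz \<Omega> Nfc"
    using SA_affine_vanish_iff[OF J beta_nonzero] conj.SA_zero_of_nrm_eqs[OF beta_nonzero, of "invol v"] nofc
    by (auto simp: sph_subset_V_iff Nfc_eq nrm_def)
  ultimately show ?thesis using nofc by (simp add: sph_disjoint_V_iff fc_eq)
qed

lemma d_zero_divisor_case:
  assumes "right_zero_divisor d"
  shows "(sph x \<inter> Vz \<Omega> f \<noteq> {} \<and>
      (\<forall>y \<in> sph x \<inter> Vz \<Omega> f.
        sph x \<inter> Vz \<Omega> f = {y' \<in> sph x. (im_el y' - im_el y) * d = 0} \<and>
        invol y \<notin> Vz \<Omega> f \<and> invol y \<in> Vz \<Omega> Nfc \<and>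
        (assoc d (invol d) y = 0 \<longleftrightarrow> sph x \<subseteq> Vz \<Omega> Nfc) \<and>
        (assoc d (invol d) y = 0 \<longleftrightarrow> y \<in> Vz \<Omega> Nf) \<and>
        (assoc d (invol d) y = 0 \<longrightarrow> (sph x \<subseteq> Vz \<Omega> Nf \<longleftrightarrow> comm (nrm d) y = 0)))) \<or>
    sph x \<inter> Vz \<Omega> f = {}"
proof -
  have "sph x \<inter> Vz \<Omega> f = {y' \<in> sph x. (im_el y' - im_el (pt I0)) * d = 0} \<and>
      invol (pt I0) \<notin> Vz \<Omega> f \<and> invol (pt I0) \<in> Vz \<Omega> Nfc \<and>
      (assoc d (invol d) (pt I0) = 0 \<longleftrightarrow> sph x \<subseteq> Vz \<Omega> Nfc) \<and>
      (assoc d (invol d) (pt I0) = 0 \<longleftrightarrow> pt I0 \<in> Vz \<Omega> Nf) \<and>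
      (assoc d (invol d) (pt I0) = 0 \<longrightarrow> (sph x \<subseteq> Vz \<Omega> Nf \<longleftrightarrow> comm (nrm d) (pt I0) = 0))"
    if I0: "I0 \<in> SA" and zero: "f (pt I0) = 0" for I0
  proof (intro conjI)
    show "sph x \<inter> Vz \<Omega> f = {y' \<in> sph x. (im_el y' - im_el (pt I0)) * d = 0}"
      using f_zero_iff[OF I0 zero] pt_in_V_iff by (auto simp: sph_eq)
    show "invol (pt I0) \<notin> Vz \<Omega> f"
      using invol_pt_in_Vf_iff[OF I0 zero] assms by (simp add: right_zero_divisor_def)
  qed (use invol_pt_in_VNfc[OF I0 zero] assoc_zero_iff_sph_subset_VNfc[OF I0 zero]
      assoc_zero_iff_in_VNf[OF I0 zero] sph_subset_VNf_iff[OF I0 zero] in simp_all)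
  then show ?thesis by (auto simp: sph_inter_V)
qed

lemma d_regular_case:
  assumes "d \<noteq> 0" and "\<not> right_zero_divisor d"
  shows "(\<exists>y. sph x \<inter> Vz \<Omega> f = {y} \<and> invol y \<in> Vz \<Omega> Nfc \<and>
        (invertible d \<longrightarrow> y = re_el x - v * inv_el d) \<and>
        (assoc d (invol d) y = 0 \<longleftrightarrow> sph x \<subseteq> Vz \<Omega> Nfc) \<and>
        (assoc d (invol d) y = 0 \<longleftrightarrow> y \<in> Vz \<Omega> Nf) \<and>
        (assoc d (invol d) y = 0 \<longrightarrow> (sph x \<subseteq> Vz \<Omega> Nf \<longleftrightarrow> comm (nrm d) y = 0)) \<and>
        (d \<in> CA - {0} \<longrightarrow>
          sph x \<subseteq> Vz \<Omega> Nf \<and> sph x \<subseteq> Vz \<Omega> Nfc \<and>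
          sph x \<inter> Vz \<Omega> fc = {(inv_el d * invol y) * d})) \<or>
    (sph x \<inter> Vz \<Omega> f = {} \<and>
      (d \<in> CA - {0} \<longrightarrow>
        sph x \<inter> Vz \<Omega> fc = {} \<and> \<not> (sph x \<subseteq> Vz \<Omega> Nf \<and> sph x \<subseteq> Vz \<Omega> Nfc) \<and>
        (v \<in> CA - {0} \<or> compatible TYPE('a) \<longrightarrow>
          \<not> sph x \<subseteq> Vz \<Omega> Nf \<and> \<not> sph x \<subseteq> Vz \<Omega> Nfc)))"
proof (cases "sph x \<inter> Vz \<Omega> f = {}")
  case True
  then show ?thesis using CA_no_zero_case by simp
next
  case False
  then obtain I0 where I0: "I0 \<in> SA" and zero: "f (pt I0) = 0" by (auto simp: sph_inter_V)
  then show ?thesis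
    using sph_inter_Vf_eq_singleton[OF I0 zero assms] invol_pt_in_VNfc[OF I0 zero]
      zero_eq_of_invertible[OF I0 zero] assoc_zero_iff_sph_subset_VNfc[OF I0 zero]
      assoc_zero_iff_in_VNf[OF I0 zero] sph_subset_VNf_iff[OF I0 zero] CA_zero_case[OF I0 zero]
    by blast
qed

end

section \<open>Stem functions\<close>

lemma stem_stem_conj: "stem D F \<Longrightarrow> stem D (stem_conj F)"
  by (simp add: stem_def stem_conj_def cinvol_def cbar_def)

lemma stem_stem_prod: "stem D F \<Longrightarrow> stem D G \<Longrightarrow> stem D (stem_prod F G)"
  by (simp add: stem_def stem_prod_def cmul_def cbar_def)

lemma stem_real_snd:
  assumes "stem D G" and "Complex \<alpha> 0 \<in> D"
  shows "snd (G (Complex \<alpha> 0)) = 0"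
proof -
  have "G (cnj (Complex \<alpha> 0)) = cbar (G (Complex \<alpha> 0))"
    using assms unfolding stem_def by blast
  then have "G (Complex \<alpha> 0) = cbar (G (Complex \<alpha> 0))" by (simp add: complex_cnj)
  then have "snd (G (Complex \<alpha> 0)) + snd (G (Complex \<alpha> 0)) = 0"
    by (metis cbar_def eq_neg_iff_add_eq_0 snd_conv)
  then show ?thesis by simp
qed

lemma sliceI_SA_point:
  fixes J :: "'a::alt_star_algebra"
  assumes G: "stem D G" and J: "J \<in> SA" and z: "Complex \<alpha> \<beta> \<in> D"
  shows "sliceI D G (rl \<alpha> + \<beta> *\<^sub>R J) = fst (G (Complex \<alpha> \<beta>)) + J * snd (G (Complex \<alpha> \<beta>))"
  unfolding sliceI_def
proof (rule some_equality)
  fix w assume "\<exists>\<alpha>' \<beta>' J'. J' \<in> SA \<and> Complex \<alpha>' \<beta>' \<in> D \<and> rl \<alpha> + \<beta> *\<^sub>R J = rl \<alpha>' + \<beta>' *\<^sub>R J' \<and>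
          w = fst (G (Complex \<alpha>' \<beta>')) + J' * snd (G (Complex \<alpha>' \<beta>'))"
  then obtain \<alpha>' \<beta>' J' where J': "J' \<in> SA" and eq: "rl \<alpha>' + \<beta>' *\<^sub>R J' = rl \<alpha> + \<beta> *\<^sub>R J"
    and w: "w = fst (G (Complex \<alpha>' \<beta>')) + J' * snd (G (Complex \<alpha>' \<beta>'))" by metis
  have "G (cnj (Complex \<alpha> \<beta>)) = cbar (G (Complex \<alpha> \<beta>))"
    using G z unfolding stem_def by blast
  then have conj: "G (Complex \<alpha> (- \<beta>)) = cbar (G (Complex \<alpha> \<beta>))" by (simp add: complex_cnj)
  from SA_point_eq_cases[OF J' J eq]
  consider "\<alpha>' = \<alpha>" "\<beta>' = \<beta>" "J' = J" | "\<alpha>' = \<alpha>" "\<beta>' = - \<beta>" "J' = - J"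
    | "\<alpha>' = \<alpha>" "\<beta> = 0" "\<beta>' = 0"
    by blast
  then show "w = fst (G (Complex \<alpha> \<beta>)) + J * snd (G (Complex \<alpha> \<beta>))"
  proof cases
    case 1
    then show ?thesis using w by simp
  next
    case 2
    then show ?thesis using w conj by (simp add: cbar_def)
  next
    case 3
    then show ?thesis using w stem_real_snd[OF G] z by simp
  qed
qed (use J z in blast)

lemma slice_values_SA_point:
  fixes J :: "'a::alt_star_algebra"
  assumes F: "stem D F" and J: "J \<in> SA" and z: "Complex \<alpha> \<beta> \<in> D"
  defines "P \<equiv> fst (F (Complex \<alpha> \<beta>))" and "Q \<equiv> snd (F (Complex \<alpha> \<beta>))"
  shows "slice_f D F (rl \<alpha> + \<beta> *\<^sub>R J) = P + J * Q"
    and "slice_fc D F (rl \<alpha> + \<beta> *\<^sub>R J) = invol P + J * invol Q"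
    and "slice_Nf D F (rl \<alpha> + \<beta> *\<^sub>R J) = (P * invol P - Q * invol Q) + J * (P * invol Q + Q * invol P)"
    and "slice_Nfc D F (rl \<alpha> + \<beta> *\<^sub>R J) = (invol P * P - invol Q * Q) + J * (invol P * Q + invol Q * P)"
proof -
  have Fc: "stem D (stem_conj F)" by (rule stem_stem_conj[OF F])
  show "slice_f D F (rl \<alpha> + \<beta> *\<^sub>R J) = P + J * Q"
    using sliceI_SA_point[OF F J z] by (simp add: slice_f_def P_def Q_def)
  show "slice_fc D F (rl \<alpha> + \<beta> *\<^sub>R J) = invol P + J * invol Q"
    using sliceI_SA_point[OF Fc J z] by (simp add: slice_fc_def P_def Q_def stem_conj_def cinvol_def)
  show "slice_Nf D F (rl \<alpha> + \<beta> *\<^sub>R J) = (P * invol P - Q * invol Q) + J * (P * invol Q + Q * invol P)"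
    using sliceI_SA_point[OF stem_stem_prod[OF F Fc] J z]
    by (simp add: slice_Nf_def P_def Q_def stem_prod_def stem_conj_def cinvol_def cmul_def)
  show "slice_Nfc D F (rl \<alpha> + \<beta> *\<^sub>R J) = (invol P * P - invol Q * Q) + J * (invol P * Q + invol Q * P)"
    using sliceI_SA_point[OF stem_stem_prod[OF Fc stem_stem_conj[OF Fc]] J z]
    by (simp add: slice_Nfc_def P_def Q_def stem_prod_def stem_conj_def cinvol_def cmul_def)
qed

lemma sphere_slice_of_stem:
  fixes J :: "'a::alt_star_algebra"
  assumes F: "stem D F" and J: "J \<in> SA" and z: "Complex \<alpha> \<beta> \<in> D" and b: "\<beta> \<noteq> 0"
  defines "x \<equiv> rl \<alpha> + \<beta> *\<^sub>R J"
  shows "sphere_slice \<alpha> \<beta> J x (sph_val (slice_f D F) x) (sph_der (slice_f D F) x)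
    (slice_f D F) (slice_fc D F) (slice_Nf D F) (slice_Nfc D F) (OmegaD D)"
proof -
  define P where "P = fst (F (Complex \<alpha> \<beta>))"
  define Q where "Q = snd (F (Complex \<alpha> \<beta>))"
  note pt_values = slice_values_SA_point[OF F _ z, folded P_def Q_def]
  have fx: "slice_f D F x = P + J * Q" using pt_values(1)[OF J] by (simp add: x_def)
  have fxc: "slice_f D F (invol x) = P - J * Q"
    using pt_values(1)[OF SA_uminus[OF J]] SA_invol[OF J] by (simp add: x_def)
  have inv_im: "inv_el (im_el x) = - (1 / \<beta>) *\<^sub>R J"
    using b SA_square[OF J]
    by (intro inv_el_eq) (simp_all add: x_def im_el_SA_point[OF J] asa_scaleR_left asa_scaleR_right)
  have "sph_val (slice_f D F) x = P"
    using fx fxc by (simp add: sph_val_def scaleR_2[symmetric])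
  moreover have "sph_der (slice_f D F) x = (1 / \<beta>) *\<^sub>R Q"
    using fx fxc SA_mult_mult[OF J, of Q]
    by (simp add: sph_der_def inv_im asa_scaleR_left asa_scaleR_right asa_distrib_right scaleR_2[symmetric])
  moreover have "sph x \<subseteq> OmegaD D"
    using sph_SA_point[OF J b] z by (auto simp: x_def OmegaD_def)
  ultimately show ?thesis
    using J b pt_values
    by unfold_locales (simp_all add: x_def Q_def[symmetric] asa_scaleR_left asa_scaleR_right
        asa_distrib_right nrm_def algebra_simps)
qed

lemma real_point_cases:
  fixes J :: "'a::alt_star_algebra"
  assumes F: "stem D F" and J: "J \<in> SA" and z: "Complex \<alpha> 0 \<in> D"
  defines "x \<equiv> rl \<alpha> :: 'a" and "Vf \<equiv> Vz (OmegaD D) (slice_f D F)"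
    and "Vfc \<equiv> Vz (OmegaD D) (slice_fc D F)" and "VNf \<equiv> Vz (OmegaD D) (slice_Nf D F)"
    and "VNfc \<equiv> Vz (OmegaD D) (slice_Nfc D F)"
  shows "(x \<in> Vf \<and> x \<in> Vfc \<and> x \<in> VNf \<and> x \<in> VNfc) \<or>
    (x \<notin> Vf \<and> x \<notin> Vfc \<and>
      ((x \<notin> VNf \<and> x \<notin> VNfc) \<or>
       (singular TYPE('a) \<and> (nz_null (slice_f D F x) \<or> nz_null (invol (slice_f D F x))))))"
proof -
  have x: "x = rl \<alpha> + 0 *\<^sub>R J" by (simp add: x_def)
  have "x \<in> OmegaD D" using J z unfolding x OmegaD_def by blast
  moreover note pt_values = slice_values_SA_point[OF F J z, folded x, unfolded stem_real_snd[OF F z]]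
  ultimately show ?thesis
    using value_zero_cases[of "fst (F (Complex \<alpha> 0))"]
    by (simp add: Vf_def Vfc_def VNf_def VNfc_def Vz_def)
qed

theorem theorem4p1:
  fixes D :: "complex set" and F :: "complex \<Rightarrow> 'a::alt_star_algebra \<times> 'a" and x :: 'a
  assumes A_fd: "fin_dim TYPE('a)"
    and D_ne: "D \<noteq> {}"
    and D_conj: "\<forall>z\<in>D. cnj z \<in> D"
    and SA_ne: "(SA :: 'a set) \<noteq> {}"
    and F_stem: "stem D F"
    and x_in: "x \<in> OmegaD D"
  shows
    "let \<Omega> = (OmegaD D :: 'a set);
         f = slice_f D F; fc = slice_fc D F; Nf = slice_Nf D F; Nfc = slice_Nfc D F;
         Vf = Vz \<Omega> f; Vfc = Vz \<Omega> fc; VNf = Vz \<Omega> Nf; VNfc = Vz \<Omega> Nfc;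
         Sx = sph x; d = sph_der f x; v = sph_val f x
     in (x \<notin> reals \<longrightarrow>
           \<comment> \<open>(1)\<close>
           (d = 0 \<longrightarrow>
              (Sx \<subseteq> Vf \<and> Sx \<subseteq> Vfc \<and> Sx \<subseteq> VNf \<and> Sx \<subseteq> VNfc) \<or>
              (Sx \<inter> Vf = {} \<and> Sx \<inter> Vfc = {} \<and>
                 ((Sx \<inter> VNf = {} \<and> Sx \<inter> VNfc = {}) \<or>
                  (singular TYPE('a) \<and> (nz_null v \<or> nz_null (invol v)))))) \<and>
           \<comment> \<open>(2)\<close>
           (right_zero_divisor d \<longrightarrow>
              (Sx \<inter> Vf \<noteq> {} \<and>
               (\<forall>y \<in> Sx \<inter> Vf.
                  Sx \<inter> Vf = {y' \<in> Sx. (im_el y' - im_el y) * d = 0} \<and>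
                  invol y \<notin> Vf \<and> invol y \<in> VNfc \<and>
                  (assoc d (invol d) y = 0 \<longleftrightarrow> Sx \<subseteq> VNfc) \<and>
                  (assoc d (invol d) y = 0 \<longleftrightarrow> y \<in> VNf) \<and>
                  (assoc d (invol d) y = 0 \<longrightarrow> (Sx \<subseteq> VNf \<longleftrightarrow> comm (nrm d) y = 0)))) \<or>
              Sx \<inter> Vf = {}) \<and>
           \<comment> \<open>(3)\<close>
           (d \<noteq> 0 \<and> \<not> right_zero_divisor d \<longrightarrow>
              (\<exists>y. Sx \<inter> Vf = {y} \<and> invol y \<in> VNfc \<and>
                  (invertible d \<longrightarrow> y = re_el x - v * inv_el d) \<and>
                  (assoc d (invol d) y = 0 \<longleftrightarrow> Sx \<subseteq> VNfc) \<and>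
                  (assoc d (invol d) y = 0 \<longleftrightarrow> y \<in> VNf) \<and>
                  (assoc d (invol d) y = 0 \<longrightarrow> (Sx \<subseteq> VNf \<longleftrightarrow> comm (nrm d) y = 0)) \<and>
                  (d \<in> CA - {0} \<longrightarrow>
                     Sx \<subseteq> VNf \<and> Sx \<subseteq> VNfc \<and>
                     Sx \<inter> Vfc = {(inv_el d * invol y) * d})) \<or>
              (Sx \<inter> Vf = {} \<and>
                 (d \<in> CA - {0} \<longrightarrow>
                    Sx \<inter> Vfc = {} \<and> \<not> (Sx \<subseteq> VNf \<and> Sx \<subseteq> VNfc) \<and>
                    (v \<in> CA - {0} \<or> compatible TYPE('a) \<longrightarrow>
                       \<not> Sx \<subseteq> VNf \<and> \<not> Sx \<subseteq> VNfc))))) \<and>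
        (x \<in> reals \<longrightarrow>
           (x \<in> Vf \<and> x \<in> Vfc \<and> x \<in> VNf \<and> x \<in> VNfc) \<or>
           (x \<notin> Vf \<and> x \<notin> Vfc \<and>
              ((x \<notin> VNf \<and> x \<notin> VNfc) \<or>
               (singular TYPE('a) \<and> (nz_null (f x) \<or> nz_null (invol (f x)))))))"
proof -
  obtain \<alpha> \<beta> J where J: "J \<in> SA" and z: "Complex \<alpha> \<beta> \<in> D" and x: "x = rl \<alpha> + \<beta> *\<^sub>R J"
    using x_in unfolding OmegaD_def by blast
  show ?thesis
  proof (cases "\<beta> = 0")
    case True
    then have "x \<in> reals" using x by (simp add: reals_def)
    with True show ?thesis
      using real_point_cases[OF F_stem J] z x by (simp add: Let_def)
  next
    case False
    interpret sphere_slice \<alpha> \<beta> J x "sph_val (slice_f D F) x" "sph_der (slice_f D F) x"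
      "slice_f D F" "slice_fc D F" "slice_Nf D F" "slice_Nfc D F" "OmegaD D"
      using sphere_slice_of_stem[OF F_stem J z False] x by simp
    show ?thesis
      using d_zero_case d_zero_divisor_case d_regular_case SA_point_not_real[OF J False] x
      by (simp add: Let_def)
  qed
qed

end
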